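(* In the setting described in the context, let $$X=W^{1/2}R^T\big(RWR^TL_{e,s}^\tau RWR^T\big)^{-1}RW^{1/2},\qquad X_1=W^{-1/2}R^\dagger(L_{e,s}^\tau)^{-1}(R^\dagger)^TW^{-1/2},$$ where $R^\dagger$ is the Moore–Penrose pseudoinverse of $R$. Then $\lambda_{\max}(X_1)\ge\lambda_{\max}(X)$.
   Context: Let $\mathcal G$ be an undirected, connected graph without self-loops, with node set $\{1,\dots,n\}$ ($n\ge2$) and edge set $\mathcal E$, $m=|\mathcal E|$. Give each edge an arbitrary orientation; the incidence matrix $D\in\mathbb R^{n\times m}$ has $D_{il}=1$ if node $i$ is the initial node of edge $l$, $-1$ if it is the terminal node, and $0$ otherwise. Fix a spanning tree $\mathcal G_\tau$ and order the edges so the first $n-1$ are tree edges; write $D=[D_\tau\ D_c]$ with $D_\tau\in\mathbb R^{n\times(n-1)}$. Set $T_\tau^c=(D_\tau^TD_\tau)^{-1}D_\tau^TD_c$ and $R=[I_{n-1}\ T_\tau^c]\in\mathbb R^{(n-1)\times m}$. Let $W=\mathrm{diag}(w_1,\dots,w_m)$, $w_l>0$, and $E=\mathrm{diag}(\epsilon_1,\dots,\epsilon_n)$, $\epsilon_i>0$; powers of these diagonal matrices are taken entrywise. Define $L_{e,s}^\tau=D_\tau^TE^{-1}D_\tau$. $\lambda_{\max}$ denotes the largest eigenvalue of a symmetric matrix. *)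

theory Defs
  imports "Jordan_Normal_Form.Matrix" "Jordan_Normal_Form.Char_Poly"
begin

(* Nodes are 0..<n (the paper's node i corresponds to i-1).
   An oriented edge list es :: (nat * nat) list; edge l goes from fst (es!l) (initial)
   to snd (es!l) (terminal). *)

definition adj_rel :: "(nat \<times> nat) list \<Rightarrow> (nat \<times> nat) set" where
  "adj_rel es = set es \<union> (set es)\<inverse>"

definition graph_connected :: "nat \<Rightarrow> (nat \<times> nat) list \<Rightarrow> bool" where
  "graph_connected n es = (\<forall>i<n. \<forall>j<n. (i, j) \<in> (adj_rel es)\<^sup>*)"

definition valid_graph :: "nat \<Rightarrow> (nat \<times> nat) list \<Rightarrow> bool" where
  "valid_graph n es = (\<forall>e\<in>set es. fst e < n \<and> snd e < n \<and> fst e \<noteq> snd e)"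

(* the first n-1 edges form a spanning tree: they are n-1 edges of the graph connecting
   all n nodes (hence, necessarily, acyclic) *)
definition first_edges_spanning_tree :: "nat \<Rightarrow> (nat \<times> nat) list \<Rightarrow> bool" where
  "first_edges_spanning_tree n es = (n - 1 \<le> length es \<and>
      graph_connected n (take (n - 1) es)
      \<and> (\<forall>e\<in>set (take (n - 1) es). fst e < n \<and> snd e < n))"

definition incidence_mat :: "nat \<Rightarrow> (nat \<times> nat) list \<Rightarrow> real mat" where
  "incidence_mat n es = mat n (length es) (\<lambda>(i, l).
      if fst (es ! l) = i then 1 else if snd (es ! l) = i then -1 else 0)"

definition D_tree :: "nat \<Rightarrow> (nat \<times> nat) list \<Rightarrow> real mat" where
  "D_tree n es = mat n (n - 1) (\<lambda>(i, l). incidence_mat n es $$ (i, l))"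

definition D_cot :: "nat \<Rightarrow> (nat \<times> nat) list \<Rightarrow> real mat" where
  "D_cot n es = mat n (length es - (n - 1)) (\<lambda>(i, l). incidence_mat n es $$ (i, l + (n - 1)))"

definition inv_mat :: "real mat \<Rightarrow> real mat" where
  "inv_mat A = (THE B. B \<in> carrier_mat (dim_row A) (dim_row A) \<and>
      A * B = 1\<^sub>m (dim_row A) \<and> B * A = 1\<^sub>m (dim_row A))"

definition pinv_mat :: "real mat \<Rightarrow> real mat" where
  "pinv_mat A = (THE B. B \<in> carrier_mat (dim_col A) (dim_row A) \<and>
      A * B * A = A \<and> B * A * B = B \<and>
      (A * B)\<^sup>T = A * B \<and> (B * A)\<^sup>T = B * A)"

definition T_tc :: "nat \<Rightarrow> (nat \<times> nat) list \<Rightarrow> real mat" where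
  "T_tc n es = inv_mat ((D_tree n es)\<^sup>T * D_tree n es) * (D_tree n es)\<^sup>T * D_cot n es"

definition R_mat :: "nat \<Rightarrow> (nat \<times> nat) list \<Rightarrow> real mat" where
  "R_mat n es = mat (n - 1) (length es) (\<lambda>(i, j).
      if j < n - 1 then (if i = j then 1 else 0) else T_tc n es $$ (i, j - (n - 1)))"

definition diag_of :: "nat \<Rightarrow> (nat \<Rightarrow> real) \<Rightarrow> real mat" where
  "diag_of k d = mat k k (\<lambda>(i, j). if i = j then d i else 0)"

definition L_es_tau :: "nat \<Rightarrow> (nat \<times> nat) list \<Rightarrow> (nat \<Rightarrow> real) \<Rightarrow> real mat" where
  "L_es_tau n es eps = (D_tree n es)\<^sup>T * diag_of n (\<lambda>i. 1 / eps i) * D_tree n es"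

definition lambda_max :: "real mat \<Rightarrow> real" where
  "lambda_max A = Max {k. eigenvalue A k}"

end

(*
  Put A = R W^(1/2).  Since R has full row rank, the pseudoinverse is R^T (R R^T)^-1, and
  Q = A^T (A A^T)^-1 A is the orthogonal projection onto the row space of A.  Using
  W^(-1/2) W^(1/2) = I one finds (R R^T)^-1 R W^(-1/2) Q = (A A^T)^-1 A, hence X = Q X1 Q.
  As X1 is positive semidefinite (L is positive definite because D_tau has full column rank
  on a spanning tree) and Q is a contraction, the Rayleigh bound for X1 evaluated at Q v, for
  an eigenvector v of X, gives lambda_max X <= lambda_max X1.  The Rayleigh characterisation
  of the largest eigenvalue of a real symmetric matrix is obtained by maximising the quadratic
  form over the unit sphere and taking the first variation at the maximiser.
*)

theory Submission
  imports Defs "HOL-Analysis.Function_Topology"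
begin

section \<open>The largest eigenvalue of a real symmetric matrix\<close>

definition quad_form :: "real mat \<Rightarrow> nat \<Rightarrow> (nat \<Rightarrow> real) \<Rightarrow> real" where
  "quad_form S k f = (\<Sum>i<k. \<Sum>j<k. f i * S $$ (i, j) * f j)"

lemma scalar_prod_mult_mat_vec_eq_quad_form:
  assumes "S \<in> carrier_mat k k" and "x \<in> carrier_vec k"
  shows "x \<bullet> (S *\<^sub>v x) = quad_form S k (($) x)"
  using assms unfolding quad_form_def scalar_prod_def mult_mat_vec_def row_def
  by (auto simp: atLeast0LessThan sum_distrib_left algebra_simps intro!: sum.cong)

lemma scalar_prod_self_eq_sum_squares:
  "(x :: real vec) \<in> carrier_vec k \<Longrightarrow> x \<bullet> x = (\<Sum>i<k. (x $ i)\<^sup>2)"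
  unfolding scalar_prod_def by (auto simp: atLeast0LessThan power2_eq_square intro!: sum.cong)

lemma scalar_prod_self_pos: "(x :: real vec) \<in> carrier_vec k \<Longrightarrow> x \<noteq> 0\<^sub>v k \<Longrightarrow> x \<bullet> x > 0"
  using conjugate_square_greater_0_vec[of x k] by simp

lemma two_scalar_prod_le:
  assumes "(v :: real vec) \<in> carrier_vec k" and "w \<in> carrier_vec k"
  shows "2 * (v \<bullet> w) \<le> v \<bullet> v + w \<bullet> w"
proof -
  have "2 * (v \<bullet> w) = (\<Sum>i<k. 2 * (v $ i * w $ i))"
    using assms unfolding scalar_prod_def by (simp add: atLeast0LessThan sum_distrib_left)
  also have "\<dots> \<le> (\<Sum>i<k. (v $ i)\<^sup>2 + (w $ i)\<^sup>2)"
    by (intro sum_mono) (metis mult.assoc sum_squares_bound)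
  also have "\<dots> = v \<bullet> v + w \<bullet> w"
    using assms by (simp add: scalar_prod_self_eq_sum_squares sum.distrib)
  finally show ?thesis .
qed

lemma quad_form_cong: "(\<And>i. i < k \<Longrightarrow> f i = g i) \<Longrightarrow> quad_form S k f = quad_form S k g"
  unfolding quad_form_def by (auto intro!: sum.cong)

lemma quad_form_scale: "quad_form S k (\<lambda>i. c * f i) = c\<^sup>2 * quad_form S k f"
  unfolding quad_form_def by (simp add: sum_distrib_left power2_eq_square algebra_simps)

lemma quad_form_add:
  assumes "\<And>i j. i < k \<Longrightarrow> j < k \<Longrightarrow> S $$ (i, j) = S $$ (j, i)"
  shows "quad_form S k (\<lambda>i. f i + t * g i)
    = quad_form S k f + 2 * t * (\<Sum>i<k. \<Sum>j<k. g i * S $$ (i, j) * f j) + t\<^sup>2 * quad_form S k g"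
proof -
  have swap: "(\<Sum>i<k. \<Sum>j<k. f i * S $$ (i, j) * g j) = (\<Sum>i<k. \<Sum>j<k. g i * S $$ (i, j) * f j)"
    by (subst sum.swap) (auto intro!: sum.cong simp: assms)
  have "quad_form S k (\<lambda>i. f i + t * g i) = quad_form S k f
      + t * (\<Sum>i<k. \<Sum>j<k. f i * S $$ (i, j) * g j) + t * (\<Sum>i<k. \<Sum>j<k. g i * S $$ (i, j) * f j)
      + t\<^sup>2 * quad_form S k g"
    unfolding quad_form_def by (simp add: sum.distrib sum_distrib_left power2_eq_square algebra_simps)
  then show ?thesis
    unfolding swap by (simp add: algebra_simps)
qed

lemma continuous_on_quad_form: "continuous_on A (quad_form S k)"
  unfolding quad_form_def
  by (intro continuous_intros continuous_on_subset[OF continuous_on_product_coordinates]) auto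

lemma compact_unit_sphere_in_cube:
  "compact (PiE UNIV (\<lambda>_. {-1..1::real}) \<inter> {f :: nat \<Rightarrow> real. (\<Sum>i<k. (f i)\<^sup>2) = 1})"
proof (rule compact_Int_closed)
  have "compactin (product_topology (\<lambda>_. euclidean) UNIV) (PiE UNIV (\<lambda>_::nat. {-1..1::real}))"
    by (subst compactin_PiE) auto
  then show "compact (PiE UNIV (\<lambda>_::nat. {-1..1::real}))"
    by (simp add: euclidean_product_topology)
  show "closed {f::nat \<Rightarrow> real. (\<Sum>i<k. (f i)\<^sup>2) = 1}"
    by (intro closed_Collect_eq continuous_intros
        continuous_on_subset[OF continuous_on_product_coordinates]) auto
qed

lemma quad_form_le_of_unit_bound:
  assumes unit_bound: "\<And>h. (\<Sum>i<k. (h i)\<^sup>2) = 1 \<Longrightarrow> (\<And>i. h i \<in> {-1..1}) \<Longrightarrow> quad_form S k h \<le> \<mu>"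
  shows "quad_form S k g \<le> \<mu> * (\<Sum>i<k. (g i)\<^sup>2)"
proof -
  define s where "s = (\<Sum>i<k. (g i)\<^sup>2)"
  show ?thesis
  proof (cases "s = 0")
    case True
    then have "quad_form S k g = quad_form S k (\<lambda>_. 0)"
      by (intro quad_form_cong) (simp add: s_def sum_nonneg_eq_0_iff)
    then show ?thesis
      using True by (simp add: s_def quad_form_def)
  next
    case False
    then have "s > 0"
      unfolding s_def by (metis order_le_neq_trans sum_nonneg zero_le_power2)
    define h where "h i = (if i < k then g i / sqrt s else 0)" for i
    have h_unit: "(\<Sum>i<k. (h i)\<^sup>2) = 1"
      using \<open>s > 0\<close> by (simp add: h_def power_divide sum_divide_distrib[symmetric] s_def[symmetric])
    have "h i \<in> {-1..1}" for i
    proof (cases "i < k")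
      case True
      then have "(h i)\<^sup>2 \<le> 1"
        using h_unit member_le_sum[of i "{..<k}" "\<lambda>i. (h i)\<^sup>2"] by auto
      then show ?thesis
        by (simp add: abs_square_le_1 abs_le_iff)
    qed (simp add: h_def)
    then have "quad_form S k h \<le> \<mu>"
      using h_unit unit_bound by blast
    moreover have "quad_form S k h = (1 / sqrt s)\<^sup>2 * quad_form S k g"
      by (subst quad_form_scale[symmetric], rule quad_form_cong) (simp add: h_def)
    ultimately show ?thesis
      using \<open>s > 0\<close> by (simp add: s_def[symmetric] power_divide pos_divide_le_eq mult.commute)
  qed
qed

lemma quad_form_attains_max_ratio:
  assumes "k > 0"
  obtains f :: "nat \<Rightarrow> real" where "(\<Sum>i<k. (f i)\<^sup>2) = 1"
    and "\<And>g. quad_form S k g \<le> quad_form S k f * (\<Sum>i<k. (g i)\<^sup>2)"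
proof -
  \<comment> \<open>the coordinates beyond \<open>k\<close> are confined to \<open>[-1, 1]\<close> only to make \<open>K\<close> compact\<close>
  define K where "K = PiE UNIV (\<lambda>_. {-1..1::real}) \<inter> {f. (\<Sum>i<k. (f i)\<^sup>2) = 1}"
  have "(\<Sum>i<k. (if i = 0 then 1 else 0 :: real)\<^sup>2) = (\<Sum>i<k. if i = 0 then 1 else 0)"
    by (rule sum.cong) auto
  then have "(\<lambda>i. if i = 0 then 1 else 0) \<in> K"
    using \<open>k > 0\<close> unfolding K_def by (auto simp: PiE_def extensional_def)
  then have "K \<noteq> {}"
    by blast
  moreover have "compact K"
    unfolding K_def by (rule compact_unit_sphere_in_cube)
  ultimately obtain f where "f \<in> K" and f_max: "\<And>h. h \<in> K \<Longrightarrow> quad_form S k h \<le> quad_form S k f"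
    using continuous_attains_sup[of K "quad_form S k"] continuous_on_quad_form by blast
  show ?thesis
  proof (rule that)
    show "(\<Sum>i<k. (f i)\<^sup>2) = 1"
      using \<open>f \<in> K\<close> unfolding K_def by auto
    show "quad_form S k g \<le> quad_form S k f * (\<Sum>i<k. (g i)\<^sup>2)" for g
      by (rule quad_form_le_of_unit_bound, rule f_max) (auto simp: K_def PiE_iff)
  qed
qed

lemma nonpos_of_linear_le_quadratic:
  fixes Y c :: real
  assumes le: "\<And>t. 2 * t * Y \<le> t\<^sup>2 * c" and "c \<ge> 0"
  shows "Y \<le> 0"
proof (rule ccontr)
  assume "\<not> Y \<le> 0"
  define t where "t = Y / (c + 1)"
  have "t > 0"
    using \<open>\<not> Y \<le> 0\<close> \<open>c \<ge> 0\<close> by (simp add: t_def)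
  then have "2 * Y \<le> t * c"
    using le[of t] by (simp add: power2_eq_square)
  also have "t * c < Y"
    using \<open>\<not> Y \<le> 0\<close> \<open>c \<ge> 0\<close> unfolding t_def by (simp add: field_simps)
  finally show False
    using \<open>\<not> Y \<le> 0\<close> by simp
qed

lemma quad_form_max_ratio_imp_eigen:
  assumes sym: "\<And>i j. i < k \<Longrightarrow> j < k \<Longrightarrow> S $$ (i, j) = S $$ (j, i)"
    and bound: "\<And>g. quad_form S k g \<le> \<mu> * (\<Sum>i<k. (g i)\<^sup>2)"
    and attained: "quad_form S k f = \<mu> * (\<Sum>i<k. (f i)\<^sup>2)"
    and "i < k"
  shows "(\<Sum>j<k. S $$ (i, j) * f j) = \<mu> * f i"
proof -
  define y where "y i = (\<Sum>j<k. S $$ (i, j) * f j) - \<mu> * f i" for i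
  define Y where "Y = (\<Sum>i<k. (y i)\<^sup>2)"
  define c where "c = \<mu> * Y - quad_form S k y"
  have "c \<ge> 0"
    using bound[of y] unfolding c_def Y_def by simp
  \<comment> \<open>perturbing \<open>f\<close> along the residual \<open>y\<close> must not increase the ratio\<close>
  have variation: "2 * t * Y \<le> t\<^sup>2 * c" for t
  proof -
    define P where "P = (\<Sum>i<k. y i * f i)"
    have row: "(\<Sum>j<k. S $$ (i, j) * f j) = y i + \<mu> * f i" for i
      by (simp add: y_def)
    have "(\<Sum>i<k. \<Sum>j<k. y i * S $$ (i, j) * f j) = (\<Sum>i<k. y i * (y i + \<mu> * f i))"
      by (intro sum.cong refl) (simp add: mult.assoc row flip: sum_distrib_left)
    also have "\<dots> = Y + \<mu> * P"
      unfolding Y_def P_def by (simp add: power2_eq_square sum.distrib sum_distrib_left algebra_simps)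
    finally have cross: "(\<Sum>i<k. \<Sum>j<k. y i * S $$ (i, j) * f j) = Y + \<mu> * P" .
    have squares: "(\<Sum>i<k. (f i + t * y i)\<^sup>2) = (\<Sum>i<k. (f i)\<^sup>2) + 2 * t * P + t\<^sup>2 * Y"
      unfolding Y_def P_def by (simp add: power2_eq_square sum.distrib sum_distrib_left algebra_simps)
    have expand: "quad_form S k (\<lambda>i. f i + t * y i)
        = quad_form S k f + 2 * t * (\<Sum>i<k. \<Sum>j<k. y i * S $$ (i, j) * f j) + t\<^sup>2 * quad_form S k y"
      by (rule quad_form_add) (simp add: sym)
    have "quad_form S k (\<lambda>i. f i + t * y i) \<le> \<mu> * (\<Sum>i<k. (f i + t * y i)\<^sup>2)"
      by (rule bound)
    then have "\<mu> * (\<Sum>i<k. (f i)\<^sup>2) + 2 * t * (Y + \<mu> * P) + t\<^sup>2 * quad_form S k y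
        \<le> \<mu> * ((\<Sum>i<k. (f i)\<^sup>2) + 2 * t * P + t\<^sup>2 * Y)"
      unfolding expand cross squares attained .
    then show ?thesis
      unfolding c_def by (simp add: algebra_simps)
  qed
  have "Y \<le> 0"
    using variation \<open>c \<ge> 0\<close> by (rule nonpos_of_linear_le_quadratic)
  then have "Y = 0"
    unfolding Y_def by (simp add: antisym sum_nonneg)
  then have "y i = 0"
    using \<open>i < k\<close> unfolding Y_def by (simp add: sum_nonneg_eq_0_iff)
  then show ?thesis
    unfolding y_def by simp
qed

lemma symmetric_mat_max_rayleigh_eigenvalue:
  fixes S :: "real mat"
  assumes S: "S \<in> carrier_mat k k" and "S\<^sup>T = S" and "k > 0"
  obtains \<mu> where "eigenvalue S \<mu>" and "\<And>x. x \<in> carrier_vec k \<Longrightarrow> x \<bullet> (S *\<^sub>v x) \<le> \<mu> * (x \<bullet> x)"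
proof -
  have sym: "S $$ (i, j) = S $$ (j, i)" if "i < k" "j < k" for i j
    using \<open>S\<^sup>T = S\<close> S that by (metis carrier_matD index_transpose_mat(1))
  obtain f where f_unit: "(\<Sum>i<k. (f i)\<^sup>2) = 1"
    and f_max: "\<And>g. quad_form S k g \<le> quad_form S k f * (\<Sum>i<k. (g i)\<^sup>2)"
    using quad_form_attains_max_ratio[OF \<open>k > 0\<close>] by blast
  define \<mu> where "\<mu> = quad_form S k f"
  define u where "u = vec k f"
  have u: "u \<in> carrier_vec k"
    unfolding u_def by simp
  have "u \<noteq> 0\<^sub>v k"
  proof
    assume "u = 0\<^sub>v k"
    then have "f i = 0" if "i < k" for i
      using that unfolding u_def by (metis index_vec index_zero_vec(1))
    then show False
      using f_unit by simp
  qed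
  moreover have "S *\<^sub>v u = \<mu> \<cdot>\<^sub>v u"
  proof (rule eq_vecI)
    fix i
    assume "i < dim_vec (\<mu> \<cdot>\<^sub>v u)"
    then have "i < k"
      using u by simp
    have "(S *\<^sub>v u) $ i = (\<Sum>j<k. S $$ (i, j) * f j)"
      using S \<open>i < k\<close> unfolding u_def mult_mat_vec_def scalar_prod_def row_def
      by (auto simp: atLeast0LessThan intro!: sum.cong)
    also have "\<dots> = \<mu> * f i"
      using f_max f_unit \<open>i < k\<close> unfolding \<mu>_def
      by (intro quad_form_max_ratio_imp_eigen[OF sym]) (auto simp: mult.commute)
    finally show "(S *\<^sub>v u) $ i = (\<mu> \<cdot>\<^sub>v u) $ i"
      using \<open>i < k\<close> unfolding u_def by simp
  qed (use S u in auto)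
  ultimately have "eigenvalue S \<mu>"
    unfolding eigenvalue_def eigenvector_def using S u by auto
  moreover have "x \<bullet> (S *\<^sub>v x) \<le> \<mu> * (x \<bullet> x)" if "x \<in> carrier_vec k" for x
    using f_max[of "($) x"] that unfolding \<mu>_def
    by (simp add: scalar_prod_mult_mat_vec_eq_quad_form[OF S] scalar_prod_self_eq_sum_squares)
  ultimately show ?thesis
    using that by blast
qed

lemma lambda_max_symmetric:
  fixes S :: "real mat"
  assumes S: "S \<in> carrier_mat k k" and "S\<^sup>T = S" and "k > 0"
  shows "eigenvalue S (lambda_max S)"
    and "\<And>x. x \<in> carrier_vec k \<Longrightarrow> x \<bullet> (S *\<^sub>v x) \<le> lambda_max S * (x \<bullet> x)"
proof -
  obtain \<mu> where ev: "eigenvalue S \<mu>"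
    and bound: "\<And>x. x \<in> carrier_vec k \<Longrightarrow> x \<bullet> (S *\<^sub>v x) \<le> \<mu> * (x \<bullet> x)"
    using symmetric_mat_max_rayleigh_eigenvalue[OF assms] by blast
  have "char_poly S \<noteq> 0"
    using degree_monic_char_poly[OF S] by auto
  then have "finite {e. eigenvalue S e}"
    using poly_roots_finite eigenvalue_root_char_poly[OF S] by simp
  moreover have "e \<le> \<mu>" if ev_e: "eigenvalue S e" for e
  proof -
    obtain v where v: "v \<in> carrier_vec k" "v \<noteq> 0\<^sub>v k" "S *\<^sub>v v = e \<cdot>\<^sub>v v"
      using ev_e S unfolding eigenvalue_def eigenvector_def by auto
    then have "e * (v \<bullet> v) \<le> \<mu> * (v \<bullet> v)"
      using bound[of v] by simp
    then show ?thesis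
      using scalar_prod_self_pos[OF v(1,2)] by simp
  qed
  ultimately have "lambda_max S = \<mu>"
    unfolding lambda_max_def using ev by (intro Max_eqI) auto
  then show "eigenvalue S (lambda_max S)"
    and "\<And>x. x \<in> carrier_vec k \<Longrightarrow> x \<bullet> (S *\<^sub>v x) \<le> lambda_max S * (x \<bullet> x)"
    using ev bound by auto
qed

section \<open>Inverses, pseudoinverses and orthogonal projections\<close>

lemma assoc_mult_mat_dim:
  "dim_col (A :: 'a :: semiring_0 mat) = dim_row B \<Longrightarrow> dim_col B = dim_row C \<Longrightarrow> A * B * C = A * (B * C)"
  by (rule assoc_mult_mat[of A "dim_row A" "dim_col A" B "dim_col B" C "dim_col C"]) auto

lemma assoc_mult_mat_vec_dim:
  "dim_col (A :: 'a :: semiring_0 mat) = dim_row B \<Longrightarrow> dim_col B = dim_vec v \<Longrightarrow> (A * B) *\<^sub>v v = A *\<^sub>v (B *\<^sub>v v)"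
  by (rule assoc_mult_mat_vec[of A "dim_row A" "dim_col A" B "dim_col B"]) auto

lemma transpose_mult_dim: "dim_col (A :: 'a :: comm_semiring_0 mat) = dim_row B \<Longrightarrow> (A * B)\<^sup>T = B\<^sup>T * A\<^sup>T"
  by (rule transpose_mult[of A "dim_row A" "dim_col A" B "dim_col B"]) auto

lemma mult_mat_vec_zero_vec: "(A :: 'a :: semiring_0 mat) \<in> carrier_mat n m \<Longrightarrow> A *\<^sub>v 0\<^sub>v m = 0\<^sub>v n"
  by (intro eq_vecI) auto

lemmas mat_assoc_simps = assoc_mult_mat_dim assoc_mult_mat_vec_dim transpose_mult_dim

lemma inv_mat_eqI:
  assumes A: "A \<in> carrier_mat k k" and B: "B \<in> carrier_mat k k" and AB: "A * B = 1\<^sub>m k"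
  shows "inv_mat A = B"
  unfolding inv_mat_def
proof (rule the_equality)
  show "B \<in> carrier_mat (dim_row A) (dim_row A) \<and> A * B = 1\<^sub>m (dim_row A) \<and> B * A = 1\<^sub>m (dim_row A)"
    using A B AB mat_mult_left_right_inverse[OF A B AB] by auto
next
  fix C
  assume "C \<in> carrier_mat (dim_row A) (dim_row A) \<and> A * C = 1\<^sub>m (dim_row A) \<and> C * A = 1\<^sub>m (dim_row A)"
  then have C: "C \<in> carrier_mat k k" and "C * A = 1\<^sub>m k"
    using A by auto
  have "C = C * (A * B)"
    using AB C by simp
  also have "\<dots> = C * A * B"
    using A B C by simp
  finally show "C = B"
    using \<open>C * A = 1\<^sub>m k\<close> B by simp
qed

lemma inverse_mat_symmetric:
  fixes A B :: "'a :: comm_semiring_1 mat"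
  assumes A: "A \<in> carrier_mat k k" and B: "B \<in> carrier_mat k k" and AB: "A * B = 1\<^sub>m k"
    and "A\<^sup>T = A"
  shows "B\<^sup>T = B"
proof -
  have "B\<^sup>T * A = 1\<^sub>m k"
    using transpose_mult[OF A B] AB \<open>A\<^sup>T = A\<close> by simp
  have "B\<^sup>T = B\<^sup>T * (A * B)"
    using AB B by simp
  also have "\<dots> = B\<^sup>T * A * B"
    using A B by simp
  finally show ?thesis
    using \<open>B\<^sup>T * A = 1\<^sub>m k\<close> B by simp
qed

lemma scalar_prod_congruence:
  fixes A B :: "'a :: comm_semiring_0 mat"
  assumes A: "A \<in> carrier_mat k k" and B: "B \<in> carrier_mat k j" and x: "x \<in> carrier_vec j"
  shows "x \<bullet> ((B\<^sup>T * A * B) *\<^sub>v x) = (B *\<^sub>v x) \<bullet> (A *\<^sub>v (B *\<^sub>v x))"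
proof -
  have "(B\<^sup>T * A * B) *\<^sub>v x = B\<^sup>T *\<^sub>v (A *\<^sub>v (B *\<^sub>v x))"
    using A B x by (simp add: mat_assoc_simps)
  then have "x \<bullet> ((B\<^sup>T * A * B) *\<^sub>v x) = (B\<^sup>T *\<^sub>v (A *\<^sub>v (B *\<^sub>v x))) \<bullet> x"
    using A B x by (simp add: comm_scalar_prod[of x j])
  also have "\<dots> = (A *\<^sub>v (B *\<^sub>v x)) \<bullet> (B *\<^sub>v x)"
    using A B x by (intro transpose_vec_mult_scalar) auto
  also have "\<dots> = (B *\<^sub>v x) \<bullet> (A *\<^sub>v (B *\<^sub>v x))"
    using A B x by (simp add: comm_scalar_prod[of _ k])
  finally show ?thesis .
qed

lemma symmetric_congruence:
  fixes A B :: "'a :: comm_semiring_0 mat"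
  assumes A: "A \<in> carrier_mat k k" and B: "B \<in> carrier_mat k j" and "A\<^sup>T = A"
  shows "(B\<^sup>T * A * B)\<^sup>T = B\<^sup>T * A * B"
  using assms by (simp add: mat_assoc_simps)

definition pos_def_mat :: "nat \<Rightarrow> real mat \<Rightarrow> bool" where
  "pos_def_mat k A \<longleftrightarrow> (\<forall>x\<in>carrier_vec k. x \<noteq> 0\<^sub>v k \<longrightarrow> x \<bullet> (A *\<^sub>v x) > 0)"

lemma pos_def_mat_one: "pos_def_mat k (1\<^sub>m k)"
  unfolding pos_def_mat_def using scalar_prod_self_pos by auto

lemma pos_def_mat_congruence:
  assumes A: "A \<in> carrier_mat k k" and "pos_def_mat k A" and B: "B \<in> carrier_mat k j"
    and inj: "\<And>x. x \<in> carrier_vec j \<Longrightarrow> B *\<^sub>v x = 0\<^sub>v k \<Longrightarrow> x = 0\<^sub>v j"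
  shows "pos_def_mat j (B\<^sup>T * A * B)"
  unfolding pos_def_mat_def
proof (intro ballI impI)
  fix x :: "real vec"
  assume x: "x \<in> carrier_vec j" "x \<noteq> 0\<^sub>v j"
  then have "B *\<^sub>v x \<noteq> 0\<^sub>v k"
    using inj by blast
  then have "(B *\<^sub>v x) \<bullet> (A *\<^sub>v (B *\<^sub>v x)) > 0"
    using \<open>pos_def_mat k A\<close> B x unfolding pos_def_mat_def by auto
  then show "x \<bullet> ((B\<^sup>T * A * B) *\<^sub>v x) > 0"
    using scalar_prod_congruence[OF A B x(1)] by simp
qed

lemma pos_def_mat_invertible:
  assumes A: "A \<in> carrier_mat k k" and "pos_def_mat k A"
  obtains B where "B \<in> carrier_mat k k" and "A * B = 1\<^sub>m k"
proof -
  have "det A \<noteq> 0"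
  proof
    assume "det A = 0"
    then obtain v where "v \<in> carrier_vec k" "v \<noteq> 0\<^sub>v k" "A *\<^sub>v v = 0\<^sub>v k"
      using det_0_iff_vec_prod_zero_field[OF A] by auto
    then show False
      using \<open>pos_def_mat k A\<close> unfolding pos_def_mat_def by fastforce
  qed
  then have "A * ((1 / det A) \<cdot>\<^sub>m adj_mat A) = 1\<^sub>m k"
    using adj_mat[OF A] by (subst mult_smult_distrib[OF A adj_mat(1)[OF A]]) (auto intro!: eq_matI)
  then show ?thesis
    using adj_mat(1)[OF A] by (intro that[of "(1 / det A) \<cdot>\<^sub>m adj_mat A"]) auto
qed

lemma pos_def_mat_inverse_nonneg:
  assumes A: "A \<in> carrier_mat k k" and "pos_def_mat k A" and B: "B \<in> carrier_mat k k"
    and AB: "A * B = 1\<^sub>m k" and y: "y \<in> carrier_vec k"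
  shows "y \<bullet> (B *\<^sub>v y) \<ge> 0"
proof (cases "B *\<^sub>v y = 0\<^sub>v k")
  case True
  then show ?thesis
    using y by simp
next
  case False
  have "A *\<^sub>v (B *\<^sub>v y) = y"
    using A B y AB by (simp flip: assoc_mult_mat_vec)
  then have "y \<bullet> (B *\<^sub>v y) = (B *\<^sub>v y) \<bullet> (A *\<^sub>v (B *\<^sub>v y))"
    using B y by (simp add: comm_scalar_prod[of y k])
  also have "\<dots> > 0"
    using \<open>pos_def_mat k A\<close> False B y unfolding pos_def_mat_def by simp
  finally show ?thesis
    by simp
qed

lemma gram_mat_inverse:
  fixes A :: "real mat"
  assumes A: "A \<in> carrier_mat d m" and inj: "\<And>x. x \<in> carrier_vec d \<Longrightarrow> A\<^sup>T *\<^sub>v x = 0\<^sub>v m \<Longrightarrow> x = 0\<^sub>v d"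
  obtains G where "G \<in> carrier_mat d d" and "G\<^sup>T = G" and "A * A\<^sup>T * G = 1\<^sub>m d" and "G * (A * A\<^sup>T) = 1\<^sub>m d"
proof -
  have AAT: "A * A\<^sup>T \<in> carrier_mat d d"
    using A by simp
  have "pos_def_mat d (A * A\<^sup>T)"
    using pos_def_mat_congruence[OF one_carrier_mat pos_def_mat_one, of "A\<^sup>T"] A inj by simp
  then obtain G where G: "G \<in> carrier_mat d d" and "A * A\<^sup>T * G = 1\<^sub>m d"
    using pos_def_mat_invertible[OF AAT] by blast
  moreover have "G\<^sup>T = G"
    using inverse_mat_symmetric[OF AAT G \<open>A * A\<^sup>T * G = 1\<^sub>m d\<close>] A by (simp add: mat_assoc_simps)
  ultimately show ?thesis
    using that mat_mult_left_right_inverse[OF AAT G] by blast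
qed

lemma pinv_mat_eqI:
  fixes A B :: "real mat"
  assumes A: "A \<in> carrier_mat d m" and B: "B \<in> carrier_mat m d"
    and ABA: "A * B * A = A" and BAB: "B * A * B = B"
    and AB: "(A * B)\<^sup>T = A * B" and BA: "(B * A)\<^sup>T = B * A"
  shows "pinv_mat A = B"
  unfolding pinv_mat_def
proof (rule the_equality)
  show "B \<in> carrier_mat (dim_col A) (dim_row A) \<and> A * B * A = A \<and> B * A * B = B
      \<and> (A * B)\<^sup>T = A * B \<and> (B * A)\<^sup>T = B * A"
    using assms by auto
next
  fix C
  assume "C \<in> carrier_mat (dim_col A) (dim_row A) \<and> A * C * A = A \<and> C * A * C = C
      \<and> (A * C)\<^sup>T = A * C \<and> (C * A)\<^sup>T = C * A"
  then have C: "C \<in> carrier_mat m d" and ACA: "A * C * A = A" and CAC: "C * A * C = C"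
    and AC: "(A * C)\<^sup>T = A * C" and CA: "(C * A)\<^sup>T = C * A"
    using A by auto
  note dims = carrier_matD[OF A] carrier_matD[OF B] carrier_matD[OF C]
  have "A * B = (A * C * A) * B"
    using ACA by simp
  also have "\<dots> = (A * C)\<^sup>T * (A * B)\<^sup>T"
    using AC AB dims by (simp add: mat_assoc_simps)
  also have "\<dots> = (A * B * A * C)\<^sup>T"
    using dims by (simp add: mat_assoc_simps)
  finally have AB_AC: "A * B = A * C"
    using ABA AC by simp
  have "B * A = B * (A * C * A)"
    using ACA by simp
  also have "\<dots> = (B * A)\<^sup>T * (C * A)\<^sup>T"
    using CA BA dims by (simp add: mat_assoc_simps)
  also have "\<dots> = (C * (A * B * A))\<^sup>T"
    using dims by (simp add: mat_assoc_simps)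
  finally have BA_CA: "B * A = C * A"
    using ABA CA by simp
  have "B = B * A * B"
    using BAB by simp
  also have "\<dots> = C * (A * C)"
    using BA_CA AB_AC dims by (simp add: mat_assoc_simps)
  finally show "C = B"
    using CAC dims by (simp add: mat_assoc_simps)
qed

lemma pinv_mat_full_row_rank:
  fixes R :: "real mat"
  assumes R: "R \<in> carrier_mat d m" and P: "P \<in> carrier_mat d d" and "P\<^sup>T = P"
    and RRP: "R * R\<^sup>T * P = 1\<^sub>m d"
  shows "pinv_mat R = R\<^sup>T * P"
proof (rule pinv_mat_eqI[OF R])
  note dims = carrier_matD[OF R] carrier_matD[OF P]
  have RRP': "R * (R\<^sup>T * P) = 1\<^sub>m d"
    using RRP dims by (simp add: mat_assoc_simps)
  show "R\<^sup>T * P \<in> carrier_mat m d"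
    using R P by simp
  show "R * (R\<^sup>T * P) * R = R"
    using RRP' R by simp
  show "R\<^sup>T * P * R * (R\<^sup>T * P) = R\<^sup>T * P"
    using RRP' dims by (simp add: mat_assoc_simps)
  show "(R * (R\<^sup>T * P))\<^sup>T = R * (R\<^sup>T * P)"
    using RRP' by simp
  show "(R\<^sup>T * P * R)\<^sup>T = R\<^sup>T * P * R"
    using symmetric_congruence[OF P R \<open>P\<^sup>T = P\<close>] by simp
qed

lemma gram_projection_idempotent:
  fixes A G :: "real mat"
  assumes A: "A \<in> carrier_mat d m" and G: "G \<in> carrier_mat d d" and "G * (A * A\<^sup>T) = 1\<^sub>m d"
  shows "A\<^sup>T * G * A * (A\<^sup>T * G * A) = A\<^sup>T * G * A"
proof -
  note dims = carrier_matD[OF A] carrier_matD[OF G]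
  have "A\<^sup>T * G * A * (A\<^sup>T * G * A) = A\<^sup>T * ((G * (A * A\<^sup>T)) * (G * A))"
    using dims by (simp add: mat_assoc_simps)
  then show ?thesis
    using \<open>G * (A * A\<^sup>T) = 1\<^sub>m d\<close> dims by (simp add: mat_assoc_simps)
qed

lemma projection_contraction:
  fixes P :: "real mat"
  assumes P: "P \<in> carrier_mat m m" and "P\<^sup>T = P" and "P * P = P" and v: "v \<in> carrier_vec m"
  shows "(P *\<^sub>v v) \<bullet> (P *\<^sub>v v) \<le> v \<bullet> v"
proof -
  have "(P *\<^sub>v v) \<bullet> (P *\<^sub>v v) = (P\<^sup>T *\<^sub>v (P *\<^sub>v v)) \<bullet> v"
    using P v by (intro transpose_vec_mult_scalar[symmetric]) auto
  also have "\<dots> = v \<bullet> (P *\<^sub>v v)"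
    using P v \<open>P\<^sup>T = P\<close> \<open>P * P = P\<close> by (simp flip: assoc_mult_mat_vec add: comm_scalar_prod[of _ m])
  finally have "(P *\<^sub>v v) \<bullet> (P *\<^sub>v v) = v \<bullet> (P *\<^sub>v v)" .
  moreover have "2 * (v \<bullet> (P *\<^sub>v v)) \<le> v \<bullet> v + (P *\<^sub>v v) \<bullet> (P *\<^sub>v v)"
    using P v by (intro two_scalar_prod_le) auto
  ultimately show ?thesis
    by linarith
qed

lemma lambda_max_congruence_contraction_le:
  fixes Y P :: "real mat"
  assumes Y: "Y \<in> carrier_mat m m" and "Y\<^sup>T = Y"
    and psd: "\<And>x. x \<in> carrier_vec m \<Longrightarrow> x \<bullet> (Y *\<^sub>v x) \<ge> 0"
    and P: "P \<in> carrier_mat m m"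
    and contraction: "\<And>v. v \<in> carrier_vec m \<Longrightarrow> (P *\<^sub>v v) \<bullet> (P *\<^sub>v v) \<le> v \<bullet> v"
    and "m > 0"
  shows "lambda_max (P\<^sup>T * Y * P) \<le> lambda_max Y"
proof -
  let ?X = "P\<^sup>T * Y * P"
  have X: "?X \<in> carrier_mat m m"
    using Y P by simp
  obtain v where v: "v \<in> carrier_vec m" "v \<noteq> 0\<^sub>v m" "?X *\<^sub>v v = lambda_max ?X \<cdot>\<^sub>v v"
    using lambda_max_symmetric(1)[OF X symmetric_congruence[OF Y P \<open>Y\<^sup>T = Y\<close>] \<open>m > 0\<close>] X
    unfolding eigenvalue_def eigenvector_def by auto
  obtain u where u: "u \<in> carrier_vec m" "u \<noteq> 0\<^sub>v m" "Y *\<^sub>v u = lambda_max Y \<cdot>\<^sub>v u"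
    using lambda_max_symmetric(1)[OF Y \<open>Y\<^sup>T = Y\<close> \<open>m > 0\<close>] Y
    unfolding eigenvalue_def eigenvector_def by auto
  have "lambda_max Y * (u \<bullet> u) \<ge> 0"
    using psd[OF u(1)] u by simp
  then have "lambda_max Y \<ge> 0"
    using scalar_prod_self_pos[OF u(1,2)] by (simp add: zero_le_mult_iff)
  have "lambda_max ?X * (v \<bullet> v) = (P *\<^sub>v v) \<bullet> (Y *\<^sub>v (P *\<^sub>v v))"
    using v scalar_prod_congruence[OF Y P v(1)] by simp
  also have "\<dots> \<le> lambda_max Y * ((P *\<^sub>v v) \<bullet> (P *\<^sub>v v))"
    using lambda_max_symmetric(2)[OF Y \<open>Y\<^sup>T = Y\<close> \<open>m > 0\<close>] P v by simp
  also have "\<dots> \<le> lambda_max Y * (v \<bullet> v)"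
    using contraction[OF v(1)] \<open>lambda_max Y \<ge> 0\<close> by (rule mult_left_mono)
  finally show ?thesis
    using scalar_prod_self_pos[OF v(1,2)] by simp
qed

lemma inv_mat_sandwich:
  fixes G L G' L' :: "real mat"
  assumes G: "G \<in> carrier_mat k k" and L: "L \<in> carrier_mat k k"
    and G': "G' \<in> carrier_mat k k" and L': "L' \<in> carrier_mat k k"
    and "G * G' = 1\<^sub>m k" and "L * L' = 1\<^sub>m k"
  shows "inv_mat (G * L * G) = G' * L' * G'"
proof (rule inv_mat_eqI)
  note dims = carrier_matD[OF G] carrier_matD[OF L] carrier_matD[OF G'] carrier_matD[OF L']
  have "G * L * G * (G' * L' * G') = G * (L * ((G * G') * (L' * G')))"
    using dims by (simp add: mat_assoc_simps)
  also have "\<dots> = G * ((L * L') * G')"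
    using \<open>G * G' = 1\<^sub>m k\<close> dims L' G' by (simp add: mat_assoc_simps)
  finally show "G * L * G * (G' * L' * G') = 1\<^sub>m k"
    using \<open>G * G' = 1\<^sub>m k\<close> \<open>L * L' = 1\<^sub>m k\<close> G' by simp
qed (use G L G' L' in auto)

lemma mult_right_invertible_transpose_inj:
  fixes R Wh Wmh :: "real mat"
  assumes R: "R \<in> carrier_mat d m" and Wh: "Wh \<in> carrier_mat m m" and Wmh: "Wmh \<in> carrier_mat m m"
    and "Wh\<^sup>T = Wh" and "Wmh * Wh = 1\<^sub>m m"
    and R_inj: "\<And>x. x \<in> carrier_vec d \<Longrightarrow> R\<^sup>T *\<^sub>v x = 0\<^sub>v m \<Longrightarrow> x = 0\<^sub>v d"
    and x: "x \<in> carrier_vec d" and "(R * Wh)\<^sup>T *\<^sub>v x = 0\<^sub>v m"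
  shows "x = 0\<^sub>v d"
proof (rule R_inj[OF x])
  have "R\<^sup>T *\<^sub>v x = (Wmh * Wh) *\<^sub>v (R\<^sup>T *\<^sub>v x)"
    using x R \<open>Wmh * Wh = 1\<^sub>m m\<close> by simp
  also have "\<dots> = Wmh *\<^sub>v ((R * Wh)\<^sup>T *\<^sub>v x)"
    using x \<open>Wh\<^sup>T = Wh\<close> carrier_matD[OF R] carrier_matD[OF Wh] carrier_matD[OF Wmh]
    by (simp add: mat_assoc_simps)
  finally show "R\<^sup>T *\<^sub>v x = 0\<^sub>v m"
    using \<open>(R * Wh)\<^sup>T *\<^sub>v x = 0\<^sub>v m\<close> Wmh by (simp add: mult_mat_vec_zero_vec)
qed

lemma weighted_sandwich_eq_projection_congruence:
  fixes R L' Wh Wmh M' P' :: "real mat"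
  assumes R: "R \<in> carrier_mat d m" and L': "L' \<in> carrier_mat d d"
    and Wh: "Wh \<in> carrier_mat m m" and Wmh: "Wmh \<in> carrier_mat m m"
    and M': "M' \<in> carrier_mat d d" and P': "P' \<in> carrier_mat d d"
    and "Wh\<^sup>T = Wh" and "Wmh * Wh = 1\<^sub>m m" and "M'\<^sup>T = M'" and "P' * (R * R\<^sup>T) = 1\<^sub>m d"
  shows "Wh * R\<^sup>T * (M' * L' * M') * R * Wh
    = ((R * Wh)\<^sup>T * M' * (R * Wh))\<^sup>T * ((P' * R * Wmh)\<^sup>T * L' * (P' * R * Wmh)) * ((R * Wh)\<^sup>T * M' * (R * Wh))"
    (is "_ = ?Q\<^sup>T * (?H\<^sup>T * L' * ?H) * ?Q")
proof -
  note dims = carrier_matD[OF R] carrier_matD[OF L'] carrier_matD[OF Wh] carrier_matD[OF Wmh]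
    carrier_matD[OF M'] carrier_matD[OF P']
  have H: "?H \<in> carrier_mat d m" and Q: "?Q \<in> carrier_mat m m"
    using P' R Wmh Wh M' by auto
  have "?H * ?Q = P' * (R * ((Wmh * Wh) * (R\<^sup>T * (M' * (R * Wh)))))"
    using \<open>Wh\<^sup>T = Wh\<close> dims by (simp add: mat_assoc_simps)
  also have "\<dots> = (P' * (R * R\<^sup>T)) * (M' * (R * Wh))"
    using \<open>Wmh * Wh = 1\<^sub>m m\<close> dims by (simp add: mat_assoc_simps)
  finally have "?H * ?Q = M' * (R * Wh)"
    using \<open>P' * (R * R\<^sup>T) = 1\<^sub>m d\<close> M' R Wh by simp
  moreover have "?Q\<^sup>T * (?H\<^sup>T * L' * ?H) * ?Q = (?H * ?Q)\<^sup>T * L' * (?H * ?Q)"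
    using carrier_matD[OF H] carrier_matD[OF Q] dims by (simp add: mat_assoc_simps)
  ultimately show ?thesis
    using \<open>M'\<^sup>T = M'\<close> \<open>Wh\<^sup>T = Wh\<close> dims by (simp add: mat_assoc_simps)
qed

lemma lambda_max_projection_compression_le:
  fixes L L' H A M' :: "real mat"
  assumes L: "L \<in> carrier_mat d d" and "pos_def_mat d L" and L': "L' \<in> carrier_mat d d"
    and "L * L' = 1\<^sub>m d" and "L'\<^sup>T = L'"
    and H: "H \<in> carrier_mat d m" and A: "A \<in> carrier_mat d m"
    and M': "M' \<in> carrier_mat d d" and "M'\<^sup>T = M'" and "M' * (A * A\<^sup>T) = 1\<^sub>m d" and "m > 0"
  shows "lambda_max ((A\<^sup>T * M' * A)\<^sup>T * (H\<^sup>T * L' * H) * (A\<^sup>T * M' * A)) \<le> lambda_max (H\<^sup>T * L' * H)"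
proof (rule lambda_max_congruence_contraction_le[OF _ _ _ _ _ \<open>m > 0\<close>])
  show "H\<^sup>T * L' * H \<in> carrier_mat m m" and "A\<^sup>T * M' * A \<in> carrier_mat m m"
    using H L' A M' by auto
  show "(H\<^sup>T * L' * H)\<^sup>T = H\<^sup>T * L' * H"
    by (rule symmetric_congruence[OF L' H \<open>L'\<^sup>T = L'\<close>])
  show "x \<bullet> ((H\<^sup>T * L' * H) *\<^sub>v x) \<ge> 0" if "x \<in> carrier_vec m" for x
    unfolding scalar_prod_congruence[OF L' H that]
    using pos_def_mat_inverse_nonneg[OF L \<open>pos_def_mat d L\<close> L' \<open>L * L' = 1\<^sub>m d\<close>] H that by simp
  show "((A\<^sup>T * M' * A) *\<^sub>v v) \<bullet> ((A\<^sup>T * M' * A) *\<^sub>v v) \<le> v \<bullet> v" if "v \<in> carrier_vec m" for v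
    using projection_contraction[OF _ symmetric_congruence[OF M' A \<open>M'\<^sup>T = M'\<close>]
        gram_projection_idempotent[OF A M' \<open>M' * (A * A\<^sup>T) = 1\<^sub>m d\<close>] that] A M'
    by simp
qed

lemma lambda_max_weighted_inverse_le_pinv:
  fixes R L W Wh Wmh :: "real mat"
  assumes R: "R \<in> carrier_mat d m" and L: "L \<in> carrier_mat d d"
    and Wh: "Wh \<in> carrier_mat m m" and Wmh: "Wmh \<in> carrier_mat m m"
    and "Wh\<^sup>T = Wh" and "Wmh\<^sup>T = Wmh" and "Wmh * Wh = 1\<^sub>m m" and "Wh * Wh = W"
    and "pos_def_mat d L" and "L\<^sup>T = L"
    and R_inj: "\<And>x. x \<in> carrier_vec d \<Longrightarrow> R\<^sup>T *\<^sub>v x = 0\<^sub>v m \<Longrightarrow> x = 0\<^sub>v d"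
    and "m > 0"
  shows "lambda_max (Wh * R\<^sup>T * inv_mat (R * W * R\<^sup>T * L * R * W * R\<^sup>T) * R * Wh)
    \<le> lambda_max (Wmh * pinv_mat R * inv_mat L * (pinv_mat R)\<^sup>T * Wmh)"
proof -
  have A: "R * Wh \<in> carrier_mat d m"
    using R Wh by simp
  obtain M' where M': "M' \<in> carrier_mat d d" and "M'\<^sup>T = M'"
    and "R * Wh * (R * Wh)\<^sup>T * M' = 1\<^sub>m d" and "M' * (R * Wh * (R * Wh)\<^sup>T) = 1\<^sub>m d"
    using gram_mat_inverse[OF A mult_right_invertible_transpose_inj[OF R Wh Wmh
          \<open>Wh\<^sup>T = Wh\<close> \<open>Wmh * Wh = 1\<^sub>m m\<close> R_inj]] by blast
  obtain P' where P': "P' \<in> carrier_mat d d" and "P'\<^sup>T = P'"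
    and "R * R\<^sup>T * P' = 1\<^sub>m d" and "P' * (R * R\<^sup>T) = 1\<^sub>m d"
    using gram_mat_inverse[OF R R_inj] by blast
  obtain L' where L': "L' \<in> carrier_mat d d" and "L * L' = 1\<^sub>m d"
    using pos_def_mat_invertible[OF L \<open>pos_def_mat d L\<close>] by blast
  have "L'\<^sup>T = L'"
    by (rule inverse_mat_symmetric[OF L L' \<open>L * L' = 1\<^sub>m d\<close> \<open>L\<^sup>T = L\<close>])
  note dims = carrier_matD[OF R] carrier_matD[OF L] carrier_matD[OF Wh] carrier_matD[OF Wmh]
    carrier_matD[OF P'] carrier_matD[OF L']
  have "R * W * R\<^sup>T * L * R * W * R\<^sup>T = R * Wh * (R * Wh)\<^sup>T * L * (R * Wh * (R * Wh)\<^sup>T)"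
    unfolding \<open>Wh * Wh = W\<close>[symmetric] using \<open>Wh\<^sup>T = Wh\<close> dims by (simp add: mat_assoc_simps)
  then have "inv_mat (R * W * R\<^sup>T * L * R * W * R\<^sup>T) = M' * L' * M'"
    using inv_mat_sandwich[OF _ L M' L' \<open>R * Wh * (R * Wh)\<^sup>T * M' = 1\<^sub>m d\<close> \<open>L * L' = 1\<^sub>m d\<close>] A by simp
  moreover have "Wmh * pinv_mat R * inv_mat L * (pinv_mat R)\<^sup>T * Wmh
      = (P' * R * Wmh)\<^sup>T * L' * (P' * R * Wmh)"
    unfolding pinv_mat_full_row_rank[OF R P' \<open>P'\<^sup>T = P'\<close> \<open>R * R\<^sup>T * P' = 1\<^sub>m d\<close>]
      inv_mat_eqI[OF L L' \<open>L * L' = 1\<^sub>m d\<close>]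
    using \<open>P'\<^sup>T = P'\<close> \<open>Wmh\<^sup>T = Wmh\<close> dims by (simp add: mat_assoc_simps)
  ultimately show ?thesis
    using weighted_sandwich_eq_projection_congruence[OF R L' Wh Wmh M' P' \<open>Wh\<^sup>T = Wh\<close>
        \<open>Wmh * Wh = 1\<^sub>m m\<close> \<open>M'\<^sup>T = M'\<close> \<open>P' * (R * R\<^sup>T) = 1\<^sub>m d\<close>]
      lambda_max_projection_compression_le[OF L \<open>pos_def_mat d L\<close> L' \<open>L * L' = 1\<^sub>m d\<close> \<open>L'\<^sup>T = L'\<close>
        _ A M' \<open>M'\<^sup>T = M'\<close> \<open>M' * (R * Wh * (R * Wh)\<^sup>T) = 1\<^sub>m d\<close> \<open>m > 0\<close>, of "P' * R * Wmh"]
      P' R Wmh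
    by simp
qed

section \<open>Weights and the incidence matrix of a spanning tree\<close>

lemma diag_of_carrier [simp]: "diag_of k a \<in> carrier_mat k k"
  unfolding diag_of_def by simp

lemma diag_of_transpose [simp]: "(diag_of k a)\<^sup>T = diag_of k a"
  by (rule eq_matI) (auto simp: diag_of_def)

lemma diag_of_mult: "diag_of k a * diag_of k b = diag_of k (\<lambda>i. a i * b i)"
proof (rule eq_matI)
  fix i j
  assume "i < dim_row (diag_of k (\<lambda>i. a i * b i))" and "j < dim_col (diag_of k (\<lambda>i. a i * b i))"
  then have "i < k" and "j < k"
    by (auto simp: diag_of_def)
  then have "(diag_of k a * diag_of k b) $$ (i, j)
      = (\<Sum>l\<in>{0..<k}. (if i = l then a i else 0) * (if l = j then b l else 0))"
    by (simp add: diag_of_def scalar_prod_def)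
  also have "\<dots> = (\<Sum>l\<in>{0..<k}. if l = i then (if i = j then a i * b i else 0) else 0)"
    by (rule sum.cong) auto
  finally show "(diag_of k a * diag_of k b) $$ (i, j) = diag_of k (\<lambda>i. a i * b i) $$ (i, j)"
    using \<open>i < k\<close> \<open>j < k\<close> by (simp add: diag_of_def)
qed (auto simp: diag_of_def)

lemma diag_of_eq_one: "(\<And>i. i < k \<Longrightarrow> a i = 1) \<Longrightarrow> diag_of k a = 1\<^sub>m k"
  by (rule eq_matI) (auto simp: diag_of_def)

lemma diag_of_cong: "(\<And>i. i < k \<Longrightarrow> a i = b i) \<Longrightarrow> diag_of k a = diag_of k b"
  by (rule eq_matI) (auto simp: diag_of_def)

lemma pos_def_mat_diag_of:
  assumes pos: "\<And>i. i < k \<Longrightarrow> a i > 0"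
  shows "pos_def_mat k (diag_of k a)"
  unfolding pos_def_mat_def
proof (intro ballI impI)
  fix x :: "real vec"
  assume x: "x \<in> carrier_vec k" and "x \<noteq> 0\<^sub>v k"
  then obtain i where "i < k" and "x $ i \<noteq> 0"
    by (metis carrier_vecD eq_vecI index_zero_vec)
  have "(\<Sum>j<k. x $ l * diag_of k a $$ (l, j) * x $ j) = (\<Sum>j<k. if j = l then a l * (x $ l)\<^sup>2 else 0)"
    if "l < k" for l
    using that by (intro sum.cong) (auto simp: diag_of_def power2_eq_square)
  then have "x \<bullet> (diag_of k a *\<^sub>v x) = (\<Sum>l<k. a l * (x $ l)\<^sup>2)"
    unfolding scalar_prod_mult_mat_vec_eq_quad_form[OF diag_of_carrier x] quad_form_def
    by (intro sum.cong) auto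
  also have "\<dots> \<ge> a i * (x $ i)\<^sup>2"
  proof (rule member_le_sum)
    show "0 \<le> a l * (x $ l)\<^sup>2" if "l \<in> {..<k} - {i}" for l
      using pos[of l] that by simp
  qed (use \<open>i < k\<close> in auto)
  moreover have "a i * (x $ i)\<^sup>2 > 0"
    using \<open>i < k\<close> \<open>x $ i \<noteq> 0\<close> pos by simp
  ultimately show "x \<bullet> (diag_of k a *\<^sub>v x) > 0"
    by linarith
qed

lemma D_tree_carrier: "D_tree n es \<in> carrier_mat n (n - 1)"
  unfolding D_tree_def by simp

lemma R_mat_carrier: "R_mat n es \<in> carrier_mat (n - 1) (length es)"
  unfolding R_mat_def by simp

lemma D_tree_entry:
  assumes "i < n" and "l < n - 1" and "n - 1 \<le> length es" and "fst (es ! l) \<noteq> snd (es ! l)"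
  shows "D_tree n es $$ (i, l) = (if i = fst (es ! l) then 1 else 0) - (if i = snd (es ! l) then 1 else 0)"
  using assms unfolding D_tree_def incidence_mat_def by auto

lemma D_tree_column_of_edge:
  assumes "first_edges_spanning_tree n es" and "valid_graph n es"
    and "(p, q) \<in> set (take (n - 1) es)"
  obtains l where "l < n - 1"
    and "\<And>i. i < n \<Longrightarrow> D_tree n es $$ (i, l) = (if i = p then 1 else 0) - (if i = q then 1 else 0)"
proof -
  have len: "n - 1 \<le> length es"
    using assms(1) unfolding first_edges_spanning_tree_def by simp
  then obtain l where "l < n - 1" and edge: "es ! l = (p, q)"
    using assms(3) by (auto simp: in_set_conv_nth)
  moreover have "p \<noteq> q"
    using assms(2) nth_mem[of l es] \<open>l < n - 1\<close> len edge unfolding valid_graph_def by force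
  ultimately show ?thesis
    using that D_tree_entry[OF _ _ len] by simp
qed

lemma D_tree_column_of_adjacent:
  assumes tree: "first_edges_spanning_tree n es" and vg: "valid_graph n es"
    and "(k, j) \<in> adj_rel (take (n - 1) es)"
  obtains l s where "l < n - 1" and "s * s = (1 :: real)"
    and "\<And>i. i < n \<Longrightarrow> D_tree n es $$ (i, l) = s * ((if i = j then 1 else 0) - (if i = k then 1 else 0))"
proof -
  from assms(3) have "(k, j) \<in> set (take (n - 1) es) \<or> (j, k) \<in> set (take (n - 1) es)"
    unfolding adj_rel_def by auto
  then show ?thesis
  proof
    assume "(k, j) \<in> set (take (n - 1) es)"
    then obtain l where "l < n - 1"
      and col: "\<And>i. i < n \<Longrightarrow> D_tree n es $$ (i, l) = (if i = k then 1 else 0) - (if i = j then 1 else 0)"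
      using D_tree_column_of_edge[OF tree vg] by blast
    show ?thesis
      by (rule that[OF \<open>l < n - 1\<close>, of "-1"]) (simp_all add: col)
  next
    assume "(j, k) \<in> set (take (n - 1) es)"
    then obtain l where "l < n - 1"
      and col: "\<And>i. i < n \<Longrightarrow> D_tree n es $$ (i, l) = (if i = j then 1 else 0) - (if i = k then 1 else 0)"
      using D_tree_column_of_edge[OF tree vg] by blast
    show ?thesis
      by (rule that[OF \<open>l < n - 1\<close>, of 1]) (simp_all add: col)
  qed
qed

lemma D_tree_path_solution:
  assumes tree: "first_edges_spanning_tree n es" and vg: "valid_graph n es"
    and "(a, j) \<in> (adj_rel (take (n - 1) es))\<^sup>*"
  shows "\<exists>f. \<forall>i<n. (\<Sum>l<n - 1. D_tree n es $$ (i, l) * f l)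
    = (if i = j then 1 else 0) - (if i = a then 1 else 0)"
  using assms(3)
proof (induction rule: rtrancl_induct)
  case base
  show ?case
    by (rule exI[of _ "\<lambda>_. 0"]) simp
next
  case (step k j)
  from step.IH obtain f where f: "\<And>i. i < n \<Longrightarrow> (\<Sum>l<n - 1. D_tree n es $$ (i, l) * f l)
      = (if i = k then 1 else 0) - (if i = a then 1 else 0)"
    by blast
  obtain l s where "l < n - 1" and "s * s = (1 :: real)"
    and column: "\<And>i. i < n \<Longrightarrow> D_tree n es $$ (i, l) = s * ((if i = j then 1 else 0) - (if i = k then 1 else 0))"
    using D_tree_column_of_adjacent[OF tree vg step.hyps(2)] by blast
  show ?case
  proof (intro exI[of _ "\<lambda>l'. f l' + s * (if l' = l then 1 else 0)"] allI impI)
    fix i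
    assume "i < n"
    have "(\<Sum>l'<n - 1. D_tree n es $$ (i, l') * (f l' + s * (if l' = l then 1 else 0)))
        = (\<Sum>l'<n - 1. D_tree n es $$ (i, l') * f l' + (if l' = l then s * D_tree n es $$ (i, l) else 0))"
      by (intro sum.cong) (auto simp: algebra_simps)
    also have "\<dots> = (\<Sum>l'<n - 1. D_tree n es $$ (i, l') * f l') + s * D_tree n es $$ (i, l)"
      using \<open>l < n - 1\<close> by (simp add: sum.distrib)
    also have "\<dots> = ((if i = k then 1 else 0) - (if i = a then 1 else 0))
        + (s * s) * ((if i = j then 1 else 0) - (if i = k then 1 else 0))"
      using f[OF \<open>i < n\<close>] column[OF \<open>i < n\<close>] by (simp add: mult.assoc)
    finally show "(\<Sum>l'<n - 1. D_tree n es $$ (i, l') * (f l' + s * (if l' = l then 1 else 0)))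
        = (if i = j then 1 else 0) - (if i = a then 1 else 0)"
      using \<open>s * s = 1\<close> by simp
  qed
qed

lemma D_tree_top_block_right_inverse:
  assumes "n \<ge> 2" and tree: "first_edges_spanning_tree n es" and vg: "valid_graph n es"
  obtains B where "B \<in> carrier_mat (n - 1) (n - 1)"
    and "mat (n - 1) (n - 1) (\<lambda>(r, c). D_tree n es $$ (r, c)) * B = 1\<^sub>m (n - 1)"
proof -
  define d where "d = n - 1"
  \<comment> \<open>a path from node \<open>d\<close> to node \<open>c\<close> gives \<open>D f = e\<^sub>c - e\<^sub>d\<close>; dropping row \<open>d\<close> leaves \<open>e\<^sub>c\<close>\<close>
  have "\<forall>c\<in>{..<d}. \<exists>f. \<forall>i<n. (\<Sum>l<d. D_tree n es $$ (i, l) * f l)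
      = (if i = c then 1 else 0) - (if i = d then 1 else 0)"
    using D_tree_path_solution[OF tree vg] tree \<open>n \<ge> 2\<close>
    unfolding first_edges_spanning_tree_def graph_connected_def d_def by auto
  then obtain F where F: "\<And>c i. c < d \<Longrightarrow> i < n \<Longrightarrow> (\<Sum>l<d. D_tree n es $$ (i, l) * F c l)
      = (if i = c then 1 else 0) - (if i = d then 1 else 0)"
    by (metis bchoice lessThan_iff)
  have "mat d d (\<lambda>(r, c). D_tree n es $$ (r, c)) * mat d d (\<lambda>(r, c). F c r) = 1\<^sub>m d"
  proof (rule eq_matI)
    fix r c
    assume "r < dim_row (1\<^sub>m d)" and "c < dim_col (1\<^sub>m d)"
    then have "r < d" and "c < d"
      by auto
    then have "(mat d d (\<lambda>(r, c). D_tree n es $$ (r, c)) * mat d d (\<lambda>(r, c). F c r)) $$ (r, c)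
        = (\<Sum>l<d. D_tree n es $$ (r, l) * F c l)"
      by (simp add: scalar_prod_def atLeast0LessThan)
    also have "\<dots> = 1\<^sub>m d $$ (r, c)"
      using F[OF \<open>c < d\<close>, of r] \<open>r < d\<close> \<open>c < d\<close> unfolding d_def by simp
    finally show "(mat d d (\<lambda>(r, c). D_tree n es $$ (r, c)) * mat d d (\<lambda>(r, c). F c r)) $$ (r, c)
        = 1\<^sub>m d $$ (r, c)" .
  qed auto
  then show ?thesis
    using that[of "mat d d (\<lambda>(r, c). F c r)"] unfolding d_def by simp
qed

lemma D_tree_inj:
  assumes "n \<ge> 2" and "first_edges_spanning_tree n es" and "valid_graph n es"
    and x: "x \<in> carrier_vec (n - 1)" and Dx: "D_tree n es *\<^sub>v x = 0\<^sub>v n"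
  shows "x = 0\<^sub>v (n - 1)"
proof -
  define d where "d = n - 1"
  define T where "T = mat d d (\<lambda>(r, c). D_tree n es $$ (r, c))"
  obtain B where B: "B \<in> carrier_mat d d" and "T * B = 1\<^sub>m d"
    using D_tree_top_block_right_inverse[OF assms(1-3)] unfolding T_def d_def by blast
  have T: "T \<in> carrier_mat d d"
    by (simp add: T_def)
  have "T *\<^sub>v x = 0\<^sub>v d"
  proof (rule eq_vecI)
    fix r
    assume "r < dim_vec (0\<^sub>v d)"
    then have "r < d" and "r < n"
      by (auto simp: d_def)
    then have "(T *\<^sub>v x) $ r = (D_tree n es *\<^sub>v x) $ r"
      using x D_tree_carrier[of n es] by (simp add: T_def d_def scalar_prod_def row_def)
    then show "(T *\<^sub>v x) $ r = 0\<^sub>v d $ r"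
      using Dx \<open>r < d\<close> \<open>r < n\<close> by simp
  qed (simp add: T_def)
  then have "(B * T) *\<^sub>v x = 0\<^sub>v d"
    using B T x by (simp add: d_def mult_mat_vec_zero_vec)
  then show ?thesis
    using mat_mult_left_right_inverse[OF T B \<open>T * B = 1\<^sub>m d\<close>] x B by (simp add: d_def)
qed

lemma R_mat_transpose_inj:
  assumes "n - 1 \<le> length es" and x: "x \<in> carrier_vec (n - 1)"
    and Rx: "(R_mat n es)\<^sup>T *\<^sub>v x = 0\<^sub>v (length es)"
  shows "x = 0\<^sub>v (n - 1)"
proof (rule eq_vecI)
  fix j
  assume "j < dim_vec (0\<^sub>v (n - 1))"
  then have "j < n - 1" and "j < length es"
    using assms(1) by auto
  then have "((R_mat n es)\<^sup>T *\<^sub>v x) $ j = (\<Sum>i\<in>{0..<n - 1}. (if i = j then 1 else 0) * x $ i)"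
    using x unfolding R_mat_def by (simp add: scalar_prod_def)
  also have "\<dots> = (\<Sum>i\<in>{0..<n - 1}. if i = j then x $ i else 0)"
    by (rule sum.cong) auto
  finally have "((R_mat n es)\<^sup>T *\<^sub>v x) $ j = x $ j"
    using \<open>j < n - 1\<close> by simp
  then show "x $ j = 0\<^sub>v (n - 1) $ j"
    using Rx \<open>j < n - 1\<close> \<open>j < length es\<close> by simp
qed (use x in auto)

lemma L_es_tau_carrier: "L_es_tau n es eps \<in> carrier_mat (n - 1) (n - 1)"
  unfolding L_es_tau_def using D_tree_carrier[of n es] by (auto intro!: mult_carrier_mat[where n = n])

lemma L_es_tau_symmetric: "(L_es_tau n es eps)\<^sup>T = L_es_tau n es eps"
  unfolding L_es_tau_def by (rule symmetric_congruence[OF diag_of_carrier D_tree_carrier diag_of_transpose])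

lemma L_es_tau_pos_def:
  assumes "n \<ge> 2" and "first_edges_spanning_tree n es" and "valid_graph n es"
    and "\<And>i. i < n \<Longrightarrow> eps i > 0"
  shows "pos_def_mat (n - 1) (L_es_tau n es eps)"
proof -
  have "pos_def_mat n (diag_of n (\<lambda>i. 1 / eps i))"
    using assms(4) by (intro pos_def_mat_diag_of) simp
  then show ?thesis
    unfolding L_es_tau_def
    using D_tree_inj[OF assms(1-3)] by (intro pos_def_mat_congruence[OF diag_of_carrier _ D_tree_carrier])
qed

theorem lemma8:
  fixes n :: nat and es :: "(nat \<times> nat) list" and w eps :: "nat \<Rightarrow> real"
  assumes "n \<ge> 2"
    and "valid_graph n es"
    and "first_edges_spanning_tree n es"
    and "\<And>l. l < length es \<Longrightarrow> w l > 0"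
    and "\<And>i. i < n \<Longrightarrow> eps i > 0"
  shows "let m = length es; R = R_mat n es; L = L_es_tau n es eps;
             W = diag_of m w;
             Wh = diag_of m (\<lambda>l. sqrt (w l));
             Wmh = diag_of m (\<lambda>l. 1 / sqrt (w l));
             X = Wh * R\<^sup>T * inv_mat (R * W * R\<^sup>T * L * R * W * R\<^sup>T) * R * Wh;
             X1 = Wmh * pinv_mat R * inv_mat L * (pinv_mat R)\<^sup>T * Wmh
         in lambda_max X1 \<ge> lambda_max X"
proof -
  have "n - 1 \<le> length es"
    using assms(3) unfolding first_edges_spanning_tree_def by simp
  then have "length es > 0"
    using \<open>n \<ge> 2\<close> by linarith
  have "diag_of (length es) (\<lambda>l. 1 / sqrt (w l)) * diag_of (length es) (\<lambda>l. sqrt (w l)) = 1\<^sub>m (length es)"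
    unfolding diag_of_mult using assms(4) by (intro diag_of_eq_one) (simp add: field_simps order_less_imp_not_eq2)
  moreover have "diag_of (length es) (\<lambda>l. sqrt (w l)) * diag_of (length es) (\<lambda>l. sqrt (w l))
      = diag_of (length es) w"
    unfolding diag_of_mult using assms(4) by (intro diag_of_cong) (simp add: less_imp_le)
  ultimately show ?thesis
    unfolding Let_def
    by (intro lambda_max_weighted_inverse_le_pinv[OF R_mat_carrier L_es_tau_carrier
        diag_of_carrier diag_of_carrier diag_of_transpose diag_of_transpose _ _
        L_es_tau_pos_def[OF assms(1,3,2,5)] L_es_tau_symmetric
        R_mat_transpose_inj[OF \<open>n - 1 \<le> length es\<close>] \<open>length es > 0\<close>])
qed

end
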